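(* For every Orlicz function $\Psi$, the map $f\mapsto\Lambda_f$ is bounded from $\mathfrak{B}^\Psi$ into $L^\Psi(\mathbb{D},\mathcal{A})$, i.e. there is $C>0$ with $\|\Lambda_f\|_{L^\Psi(\mathcal{A})}\le C\|f\|_{\mathfrak{B}^\Psi}$ for all $f\in\mathfrak{B}^\Psi$.
   Context: $\mathbb{D}$ is the open unit disk, $\mathcal{A}$ the normalized area measure $dx\,dy/\pi$. An Orlicz function is a nonnegative increasing convex $\Psi\colon[0,\infty)\to[0,\infty)$ with $\Psi(0)=0$, $\Psi(x)>0$ for $x>0$, $\Psi(\infty)=\infty$. $L^\Psi(\mathcal{A})$ has the Luxemburg norm $\inf\{C>0:\int_{\mathbb{D}}\Psi(|g|/C)\,d\mathcal{A}\le1\}$ and $\mathfrak{B}^\Psi$ is its subspace of analytic functions. The Hastings–Luecking sets are, for $k=2^n+j-1$ with $n\ge0$, $0\le j\le2^n-1$: $\Delta_k=\{z\in\mathbb{D}:1-2^{-n}\le|z|<1-2^{-n-1},\ (2j-1)\pi/2^n\le\arg z<(2j+1)\pi/2^n\}$ (they partition $\mathbb{D}$; $\Delta_0=\{|z|<1/2\}$). For $f$ analytic on $\mathbb{D}$, $\Lambda_f=\sum_{k\ge0}\big(\sup_{\Delta_k}|f|\big)\mathbf{1}_{\Delta_k}$. *)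

theory Defs
  imports "HOL-Analysis.Analysis"
begin

definition orlicz_function :: "(real \<Rightarrow> real) \<Rightarrow> bool" where
  "orlicz_function \<Psi> \<longleftrightarrow>
     (\<forall>x\<ge>0. \<Psi> x \<ge> 0) \<and> mono_on {0..} \<Psi> \<and> convex_on {0..} \<Psi> \<and>
     \<Psi> 0 = 0 \<and> (\<forall>x>0. \<Psi> x > 0) \<and> filterlim \<Psi> at_top at_top"

definition areaD :: "complex measure" where
  "areaD = density (restrict_space lborel (ball 0 1)) (\<lambda>_. ennreal (1 / pi))"

definition orlicz_modular :: "(real \<Rightarrow> real) \<Rightarrow> (complex \<Rightarrow> 'b::real_normed_vector) \<Rightarrow> real \<Rightarrow> ennreal" where
  "orlicz_modular \<Psi> g C = (\<integral>\<^sup>+ z. ennreal (\<Psi> (norm (g z) / C)) \<partial>areaD)"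

definition in_Orlicz :: "(real \<Rightarrow> real) \<Rightarrow> (complex \<Rightarrow> 'b::real_normed_vector) \<Rightarrow> bool" where
  "in_Orlicz \<Psi> g \<longleftrightarrow> g \<in> borel_measurable areaD \<and> (\<exists>C>0. orlicz_modular \<Psi> g C \<le> 1)"

definition lux_norm :: "(real \<Rightarrow> real) \<Rightarrow> (complex \<Rightarrow> 'b::real_normed_vector) \<Rightarrow> real" where
  "lux_norm \<Psi> g = Inf {C. C > 0 \<and> orlicz_modular \<Psi> g C \<le> 1}"

definition in_Bergman_Orlicz :: "(real \<Rightarrow> real) \<Rightarrow> (complex \<Rightarrow> complex) \<Rightarrow> bool" where
  "in_Bergman_Orlicz \<Psi> f \<longleftrightarrow> f holomorphic_on ball 0 1 \<and> in_Orlicz \<Psi> f"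

text \<open>Hastings--Luecking sets; the argument is taken modulo 2 pi.\<close>
definition HL_set :: "nat \<Rightarrow> complex set" where
  "HL_set k = {z. \<exists>n j::nat. k = 2^n + j - 1 \<and> j \<le> 2^n - 1 \<and>
      1 - 1 / 2^n \<le> norm z \<and> norm z < 1 - 1 / 2^(n+1) \<and>
      (\<exists>m::int. (2 * real j - 1) * pi / 2^n \<le> Arg z + 2 * pi * m \<and>
                Arg z + 2 * pi * m < (2 * real j + 1) * pi / 2^n)}"

definition Lambda :: "(complex \<Rightarrow> complex) \<Rightarrow> complex \<Rightarrow> real" where
  "Lambda f z = (\<Sum>k. (SUP w\<in>HL_set k. norm (f w)) * indicator (HL_set k) z)"

end

theory Submission
  imports Defs "HOL-Complex_Analysis.Complex_Analysis" "HOL-Probability.Probability"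
begin

text \<open>
  Write d(z) = 1 - |z|. Two points z, a of the same Hastings--Luecking set satisfy
  |a - z| < 14 d(z) and d(z) < 2 d(a), so the disc of radius d(a)/4 about a lies in the region
  K_z = {w. |w - z| < 16 d(z) \<and> d(z) \<le> 4 d(w)}. For \<Phi> increasing, convex and nonnegative,
  \<Phi>(|f|) has the sub-mean value property on discs (Cauchy's formula, Jensen's inequality on
  circles, and an average over rotations); hence \<Phi>(|f(a)|) is at most 64 / (\<pi> d(z)^2) times the
  integral of \<Phi>(|f|) over K_z, and taking the supremum over a gives the same bound for \<Phi>(\<Lambda>_f(z)).
  Integrating in z and exchanging the integrals, each w is charged only by the z in a disc of area
  O(d(w)^2) on which d(z) is comparable to d(w), so \<integral> \<Phi>(\<Lambda>_f) \<le> M \<integral> \<Phi>(|f|). For \<Phi> = \<Psi>(\<cdot>/C),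
  convexity and \<Psi>(0) = 0 turn this into \<integral> \<Psi>(\<Lambda>_f/(MC)) \<le> \<integral> \<Psi>(|f|/C), which bounds the
  Luxemburg norm of \<Lambda>_f by M times that of f.
\<close>

section \<open>Convex functions\<close>

lemma convex_on_scaled_arg:
  fixes \<phi> :: "real \<Rightarrow> real"
  assumes "convex_on UNIV \<phi>"
  shows "convex_on UNIV (\<lambda>x. \<phi> (c * x))"
proof (rule convex_onI)
  fix t x y :: real
  assume t: "0 < t" "t < 1"
  have "c * ((1 - t) *\<^sub>R x + t *\<^sub>R y) = (1 - t) *\<^sub>R (c * x) + t *\<^sub>R (c * y)"
    by (simp add: algebra_simps)
  then show "\<phi> (c * ((1 - t) *\<^sub>R x + t *\<^sub>R y)) \<le> (1 - t) * \<phi> (c * x) + t * \<phi> (c * y)"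
    using convex_onD[OF assms, of t "c * x" "c * y"] t by simp
qed simp

lemma convex_on_divide_le:
  fixes \<phi> :: "real \<Rightarrow> real"
  assumes "convex_on UNIV \<phi>" "\<phi> 0 = 0" "1 \<le> M"
  shows "\<phi> (x / M) \<le> \<phi> x / M"
  using convex_onD[OF assms(1), of "1 / M" 0 x] assms(2,3) by simp

text \<open>An Orlicz function is only constrained on [0, \<infinity>); extended by \<Psi>(max 0 x) it becomes
  increasing and convex on all of \<real>, as needed for Jensen's inequality and for continuity.\<close>

definition orlicz_ext :: "(real \<Rightarrow> real) \<Rightarrow> real \<Rightarrow> real" where
  "orlicz_ext \<Psi> x = \<Psi> (max 0 x)"

context
  fixes \<Psi> :: "real \<Rightarrow> real"
  assumes \<Psi>: "orlicz_function \<Psi>"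
begin

lemma orlicz_ext_nonneg: "0 \<le> orlicz_ext \<Psi> x"
  using \<Psi> by (simp add: orlicz_ext_def orlicz_function_def)

lemma orlicz_ext_0: "orlicz_ext \<Psi> 0 = 0"
  using \<Psi> by (simp add: orlicz_ext_def orlicz_function_def)

lemma orlicz_ext_mono: "mono (orlicz_ext \<Psi>)"
proof
  fix x y :: real
  assume "x \<le> y"
  moreover have "mono_on {0..} \<Psi>"
    using \<Psi> by (simp add: orlicz_function_def)
  ultimately show "orlicz_ext \<Psi> x \<le> orlicz_ext \<Psi> y"
    unfolding orlicz_ext_def by (simp add: mono_onD)
qed

lemma orlicz_ext_convex: "convex_on UNIV (orlicz_ext \<Psi>)"
proof (rule convex_onI)
  fix t x y :: real
  assume t: "0 < t" "t < 1"
  have mono: "mono_on {0..} \<Psi>" and convex: "convex_on {0..} \<Psi>"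
    using \<Psi> by (simp_all add: orlicz_function_def)
  define w where "w = (1 - t) * max 0 x + t * max 0 y"
  have "(1 - t) * x \<le> (1 - t) * max 0 x" "t * y \<le> t * max 0 y"
    using t by (simp_all add: mult_left_mono)
  then have "(1 - t) * x + t * y \<le> w"
    unfolding w_def by (rule add_mono)
  moreover have "0 \<le> w"
    using t by (simp add: w_def)
  ultimately have "max 0 ((1 - t) *\<^sub>R x + t *\<^sub>R y) \<le> w"
    by simp
  then have "orlicz_ext \<Psi> ((1 - t) *\<^sub>R x + t *\<^sub>R y) \<le> \<Psi> w"
    unfolding orlicz_ext_def using \<open>0 \<le> w\<close> by (intro mono_onD[OF mono]) auto
  also have "\<Psi> w \<le> (1 - t) * \<Psi> (max 0 x) + t * \<Psi> (max 0 y)"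
    using convex_onD[OF convex, of t "max 0 x" "max 0 y"] t by (simp add: w_def)
  finally show "orlicz_ext \<Psi> ((1 - t) *\<^sub>R x + t *\<^sub>R y) \<le> (1 - t) * orlicz_ext \<Psi> x + t * orlicz_ext \<Psi> y"
    by (simp only: orlicz_ext_def)
qed simp

end

locale nonneg_mono_convex =
  fixes \<phi> :: "real \<Rightarrow> real"
  assumes convex: "convex_on UNIV \<phi>" and mono: "mono \<phi>" and nonneg: "\<And>x. 0 \<le> \<phi> x"
begin

lemma continuous: "continuous_on UNIV \<phi>"
  by (rule convex_on_continuous[OF open_UNIV convex])

lemma SUP_le:
  assumes "X \<noteq> {}" "bdd_above (h ` X)" "\<And>x. x \<in> X \<Longrightarrow> \<phi> (h x) \<le> b"
  shows "\<phi> (SUP x\<in>X. h x) \<le> b"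
proof -
  have "continuous (at_left (SUP x\<in>X. h x)) \<phi>"
    using continuous by (simp add: continuous_on_eq_continuous_at continuous_at_imp_continuous_within)
  then have "\<phi> (SUP x\<in>X. h x) = (SUP y\<in>h ` X. \<phi> y)"
    using assms(1,2) by (intro continuous_at_Sup_mono[OF mono]) auto
  also have "\<dots> \<le> b"
    using assms by (intro cSUP_least) auto
  finally show ?thesis .
qed

lemma indicator_ball_times_borel:
  assumes "continuous_on (ball a r) g"
  shows "(\<lambda>w. indicator (ball a r) w * \<phi> (g w)) \<in> borel_measurable borel"
proof -
  have "(\<lambda>w. indicator (ball a r) w *\<^sub>R \<phi> (g w)) \<in> borel_measurable borel"
    by (intro borel_measurable_continuous_on_indicator continuous_on_compose2[OF continuous assms]) auto
  then show ?thesis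
    by simp
qed

end

section \<open>Mean value inequalities for holomorphic functions\<close>

lemma holomorphic_circle_mean_value:
  assumes hol: "f holomorphic_on ball a R" and v: "norm v < R"
  shows "((\<lambda>t. f (a + v * exp (2 * of_real pi * \<i> * of_real t))) has_integral f a) {0..1}"
proof (cases "v = 0")
  case True
  then show ?thesis
    using has_integral_const_real[of "f a" 0 1] by simp
next
  case False
  define \<rho> where "\<rho> = norm v"
  define e where "e = v / of_real \<rho>"
  have \<rho>: "\<rho> > 0" and e: "e * of_real \<rho> = v" "norm e = 1"
    using False by (simp_all add: \<rho>_def e_def norm_divide)
  define F where "F = (\<lambda>w. f (a + e * (w - a)))"
  have "(\<lambda>w. a + e * (w - a)) ` cball a \<rho> \<subseteq> ball a R"
    using e v by (auto simp: \<rho>_def dist_norm norm_mult norm_minus_commute)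
  then have "F holomorphic_on cball a \<rho>"
    unfolding F_def by (intro holomorphic_on_compose_gen[OF _ hol, unfolded o_def]) (auto intro!: holomorphic_intros)
  then have "((\<lambda>w. F w / (w - a)) has_contour_integral (2 * of_real pi * \<i> * F a)) (circlepath a \<rho>)"
    using \<rho> by (intro Cauchy_integral_circlepath_simple) auto
  then have "((\<lambda>t. (2 * of_real pi * \<i>) * f (a + v * exp (2 * of_real pi * \<i> * of_real t)))
      has_integral (2 * of_real pi * \<i> * F a)) {0..1}"
    unfolding has_contour_integral
  proof (rule has_integral_eq[rotated])
    fix t :: real
    show "F (circlepath a \<rho> t) / (circlepath a \<rho> t - a) * vector_derivative (circlepath a \<rho>) (at t)
        = (2 * of_real pi * \<i>) * f (a + v * exp (2 * of_real pi * \<i> * of_real t))"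
      unfolding vector_derivative_circlepath using \<rho> by (simp add: circlepath F_def field_simps e(1)[symmetric] mult.assoc)
  qed
  then show ?thesis
    by (subst (asm) has_integral_mult_right_iff) (simp_all add: F_def)
qed

context nonneg_mono_convex
begin

lemma le_circle_mean:
  assumes hol: "f holomorphic_on ball a R" and v: "norm v < R"
  shows "ennreal (\<phi> (norm (f a))) \<le>
    (\<integral>\<^sup>+ t. ennreal (\<phi> (norm (f (a + v * exp (2 * of_real pi * \<i> * of_real t))))) * indicator {0..1} t \<partial>lborel)"
proof -
  define g where "g t = f (a + v * exp (2 * of_real pi * \<i> * of_real t))" for t
  define X where "X t = norm (g t)" for t
  interpret M: prob_space "lebesgue_on {0..1::real}"
    by (rule prob_spaceI) (simp add: emeasure_restrict_space)
  have cg: "continuous_on {0..1} g"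
    unfolding g_def using v
    by (intro continuous_on_compose2[OF holomorphic_on_imp_continuous_on[OF hol]] continuous_intros)
      (auto simp: dist_norm norm_mult)
  then have cX: "continuous_on {0..1} X" and c\<phi>X: "continuous_on {0..1} (\<lambda>t. \<phi> (X t))"
    unfolding X_def by (auto intro!: continuous_on_compose2[OF continuous] continuous_intros)
  have iX: "integrable (lebesgue_on {0..1}) X" and i\<phi>X: "integrable (lebesgue_on {0..1}) (\<lambda>t. \<phi> (X t))"
    using cX c\<phi>X by (simp_all add: continuous_imp_integrable_real)
  have "norm (integral {0..1} g) \<le> integral {0..1} X"
    unfolding X_def using cg
    by (intro integral_norm_bound_integral integrable_continuous_interval continuous_on_norm) auto
  moreover have "integral {0..1} g = f a"
    unfolding g_def using holomorphic_circle_mean_value[OF hol v] by (rule integral_unique)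
  ultimately have "norm (f a) \<le> integral {0..1} X"
    by simp
  also have "\<dots> = integral\<^sup>L (lebesgue_on {0..1}) X"
    using has_integral_integral_lebesgue_on[OF iX] by (simp add: integral_unique)
  finally have "\<phi> (norm (f a)) \<le> \<phi> (integral\<^sup>L (lebesgue_on {0..1}) X)"
    by (rule monoD[OF mono])
  also have "\<dots> \<le> integral\<^sup>L (lebesgue_on {0..1}) (\<lambda>t. \<phi> (X t))"
    by (rule M.jensens_inequality[where I=UNIV]) (use iX i\<phi>X convex in auto)
  finally have "ennreal (\<phi> (norm (f a))) \<le> ennreal (integral\<^sup>L (lebesgue_on {0..1}) (\<lambda>t. \<phi> (X t)))"
    by (rule ennreal_leI)
  also have "\<dots> = (\<integral>\<^sup>+ t. ennreal (\<phi> (X t)) * indicator {0..1} t \<partial>lborel)"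
    using nonneg has_integral_integral_lebesgue_on[OF i\<phi>X]
    by (intro nn_integral_has_integral_lebesgue'[symmetric]) auto
  finally show ?thesis
    by (simp add: X_def g_def)
qed

end

lemma borel_measurable_Complex [measurable]:
  assumes "f \<in> borel_measurable M" "g \<in> borel_measurable M"
  shows "(\<lambda>x. Complex (f x) (g x)) \<in> borel_measurable M"
  using assms unfolding Complex_eq by measurable

lemma lborel_complex_eq_distr_pair:
  "(lborel :: complex measure) = distr (lborel \<Otimes>\<^sub>M lborel) borel (\<lambda>(x, y). Complex x y)"
proof (rule lborel_eqI)
  fix l u :: complex
  assume le: "\<And>b. b \<in> Basis \<Longrightarrow> l \<bullet> b \<le> u \<bullet> b"
  have m: "(\<lambda>(x, y). Complex x y) \<in> (lborel \<Otimes>\<^sub>M lborel :: (real \<times> real) measure) \<rightarrow>\<^sub>M borel"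
    by measurable
  have "(\<lambda>(x, y). Complex x y) -` box l u \<inter> space (lborel \<Otimes>\<^sub>M lborel) = {Re l<..<Re u} \<times> {Im l<..<Im u}"
    by (auto simp: box_def Basis_complex_def space_pair_measure)
  moreover have "Re l \<le> Re u" "Im l \<le> Im u"
    using le[of 1] le[of \<i>] by (auto simp: Basis_complex_def)
  ultimately show "emeasure (distr (lborel \<Otimes>\<^sub>M lborel) borel (\<lambda>(x, y). Complex x y)) (box l u) = (\<Prod>b\<in>Basis. (u - l) \<bullet> b)"
    using m by (simp add: emeasure_distr lborel.emeasure_pair_measure_Times Basis_complex_def ennreal_mult)
qed simp

lemma nn_integral_lborel_complex:
  fixes h :: "complex \<Rightarrow> ennreal"
  assumes [measurable]: "h \<in> borel_measurable borel"
  shows "(\<integral>\<^sup>+ z. h z \<partial>lborel) = (\<integral>\<^sup>+ x. \<integral>\<^sup>+ y. h (Complex x y) \<partial>lborel \<partial>lborel)"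
    and "(\<integral>\<^sup>+ z. h z \<partial>lborel) = (\<integral>\<^sup>+ y. \<integral>\<^sup>+ x. h (Complex x y) \<partial>lborel \<partial>lborel)"
proof -
  have eq: "(\<integral>\<^sup>+ z. h z \<partial>lborel) = (\<integral>\<^sup>+ p. h (Complex (fst p) (snd p)) \<partial>(lborel \<Otimes>\<^sub>M lborel))"
    by (subst lborel_complex_eq_distr_pair) (simp add: nn_integral_distr case_prod_beta')
  show "(\<integral>\<^sup>+ z. h z \<partial>lborel) = (\<integral>\<^sup>+ x. \<integral>\<^sup>+ y. h (Complex x y) \<partial>lborel \<partial>lborel)"
    unfolding eq by (subst lborel.nn_integral_fst[symmetric]) (auto simp: case_prod_beta')
  show "(\<integral>\<^sup>+ z. h z \<partial>lborel) = (\<integral>\<^sup>+ y. \<integral>\<^sup>+ x. h (Complex x y) \<partial>lborel \<partial>lborel)"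
    unfolding eq by (subst lborel_pair.nn_integral_snd[symmetric]) (auto simp: case_prod_beta')
qed

lemma nn_integral_lborel_shear_Re:
  fixes h :: "complex \<Rightarrow> ennreal"
  assumes [measurable]: "h \<in> borel_measurable borel"
  shows "(\<integral>\<^sup>+ z. h (z + of_real (p * Im z)) \<partial>lborel) = (\<integral>\<^sup>+ z. h z \<partial>lborel)"
proof -
  have shear: "Complex x y + of_real (p * Im (Complex x y)) = Complex (p * y + x) y" for x y
    by (simp add: complex_eq_iff)
  have "(\<integral>\<^sup>+ z. h (z + of_real (p * Im z)) \<partial>lborel) = (\<integral>\<^sup>+ y. \<integral>\<^sup>+ x. h (Complex (p * y + x) y) \<partial>lborel \<partial>lborel)"
    by (subst nn_integral_lborel_complex(2)) (simp_all only: shear, measurable)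
  also have "\<dots> = (\<integral>\<^sup>+ y. \<integral>\<^sup>+ x. h (Complex x y) \<partial>lborel \<partial>lborel)"
  proof (rule nn_integral_cong)
    fix y :: real
    have "(\<lambda>x. h (Complex x y)) \<in> borel_measurable borel"
      by measurable
    from nn_integral_real_affine[OF this, where c=1 and t="p * y"]
    show "(\<integral>\<^sup>+ x. h (Complex (p * y + x) y) \<partial>lborel) = (\<integral>\<^sup>+ x. h (Complex x y) \<partial>lborel)"
      by simp
  qed
  also have "\<dots> = (\<integral>\<^sup>+ z. h z \<partial>lborel)"
    by (rule nn_integral_lborel_complex(2)[symmetric]) simp
  finally show ?thesis .
qed

lemma nn_integral_lborel_shear_Im:
  fixes h :: "complex \<Rightarrow> ennreal"
  assumes [measurable]: "h \<in> borel_measurable borel"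
  shows "(\<integral>\<^sup>+ z. h (z + \<i> * of_real (p * Re z)) \<partial>lborel) = (\<integral>\<^sup>+ z. h z \<partial>lborel)"
proof -
  have shear: "Complex x y + \<i> * of_real (p * Re (Complex x y)) = Complex x (p * x + y)" for x y
    by (simp add: complex_eq_iff)
  have "(\<integral>\<^sup>+ z. h (z + \<i> * of_real (p * Re z)) \<partial>lborel) = (\<integral>\<^sup>+ x. \<integral>\<^sup>+ y. h (Complex x (p * x + y)) \<partial>lborel \<partial>lborel)"
    by (subst nn_integral_lborel_complex(1)) (simp_all only: shear, measurable)
  also have "\<dots> = (\<integral>\<^sup>+ x. \<integral>\<^sup>+ y. h (Complex x y) \<partial>lborel \<partial>lborel)"
  proof (rule nn_integral_cong)
    fix x :: real
    have "(\<lambda>y. h (Complex x y)) \<in> borel_measurable borel"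
      by measurable
    from nn_integral_real_affine[OF this, where c=1 and t="p * x"]
    show "(\<integral>\<^sup>+ y. h (Complex x (p * x + y)) \<partial>lborel) = (\<integral>\<^sup>+ y. h (Complex x y) \<partial>lborel)"
      by simp
  qed
  also have "\<dots> = (\<integral>\<^sup>+ z. h z \<partial>lborel)"
    by (rule nn_integral_lborel_complex(1)[symmetric]) simp
  finally show ?thesis .
qed

text \<open>The classical factorisation of a rotation into three shears; for c = exp(i \<theta>) one has t = tan(\<theta>/2).\<close>

lemma rotation_eq_shears:
  assumes "norm c = 1" "c \<noteq> -1"
  defines "t \<equiv> Im c / (1 + Re c)"
  shows "c * z = (\<lambda>w. w + of_real (- t * Im w)) ((\<lambda>w. w + \<i> * of_real (Im c * Re w)) (z + of_real (- t * Im z)))"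
proof -
  have ab: "Re c ^ 2 + Im c ^ 2 = 1"
    using assms(1) by (simp add: cmod_def)
  have "1 + Re c \<noteq> 0"
  proof
    assume "1 + Re c = 0"
    then have "Re c = -1"
      by simp
    moreover from this ab have "Im c = 0"
      by (simp add: power2_eq_square)
    ultimately show False
      using assms(2) by (simp add: complex_eq_iff)
  qed
  then have tb: "t * Im c = 1 - Re c" and t_eq: "t * (1 + Re c) = Im c"
    unfolding t_def using ab by (simp_all add: field_simps power2_eq_square)
  show ?thesis
    unfolding complex_eq_iff using tb t_eq by simp algebra
qed

lemma nn_integral_lborel_rotation:
  fixes h :: "complex \<Rightarrow> ennreal"
  assumes [measurable]: "h \<in> borel_measurable borel" and c: "norm c = 1"
  shows "(\<integral>\<^sup>+ z. h (c * z) \<partial>lborel) = (\<integral>\<^sup>+ z. h z \<partial>lborel)"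
proof -
  have shears: "(\<integral>\<^sup>+ z. h (c * z) \<partial>lborel) = (\<integral>\<^sup>+ z. h z \<partial>lborel)"
    if [measurable]: "h \<in> borel_measurable borel" and c: "norm c = 1" "c \<noteq> -1"
    for h :: "complex \<Rightarrow> ennreal" and c
  proof -
    define t where "t = Im c / (1 + Re c)"
    have "(\<integral>\<^sup>+ z. h (c * z) \<partial>lborel) = (\<integral>\<^sup>+ z.
        (\<lambda>w. (\<lambda>u. h (u + of_real (- t * Im u))) (w + \<i> * of_real (Im c * Re w))) (z + of_real (- t * Im z)) \<partial>lborel)"
      using rotation_eq_shears[OF c] by (simp only: t_def)
    also have "\<dots> = (\<integral>\<^sup>+ w. (\<lambda>u. h (u + of_real (- t * Im u))) (w + \<i> * of_real (Im c * Re w)) \<partial>lborel)"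
      by (rule nn_integral_lborel_shear_Re) measurable
    also have "\<dots> = (\<integral>\<^sup>+ u. h (u + of_real (- t * Im u)) \<partial>lborel)"
      by (rule nn_integral_lborel_shear_Im) measurable
    also have "\<dots> = (\<integral>\<^sup>+ z. h z \<partial>lborel)"
      by (rule nn_integral_lborel_shear_Re) measurable
    finally show ?thesis .
  qed
  show ?thesis
  proof (cases "c = -1")
    case True
    have "(\<integral>\<^sup>+ z. h (c * z) \<partial>lborel) = (\<integral>\<^sup>+ z. (\<lambda>w. h (\<i> * w)) (\<i> * z) \<partial>lborel)"
      using True by simp
    also have "\<dots> = (\<integral>\<^sup>+ z. h (\<i> * z) \<partial>lborel)"
      by (rule shears) (auto simp: complex_eq_iff)
    also have "\<dots> = (\<integral>\<^sup>+ z. h z \<partial>lborel)"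
      by (rule shears) (auto simp: complex_eq_iff)
    finally show ?thesis .
  qed (use shears c in auto)
qed

lemma nn_integral_lborel_rotation_average:
  fixes G :: "complex \<Rightarrow> ennreal"
  assumes [measurable]: "G \<in> borel_measurable borel"
  shows "(\<integral>\<^sup>+ w. G w \<partial>lborel) =
    (\<integral>\<^sup>+ v. \<integral>\<^sup>+ t. indicator {0..1} t * G (a + exp (2 * of_real pi * \<i> * of_real t) * v) \<partial>lborel \<partial>lborel)"
proof -
  define e where "e t = exp (2 * of_real pi * \<i> * of_real t)" for t :: real
  have [measurable]: "e \<in> borel_measurable borel"
    unfolding e_def by (intro borel_measurable_continuous_onI continuous_intros)
  have norm_e: "norm (e t) = 1" for t
    by (simp add: e_def norm_exp_eq_Re)
  have "(\<integral>\<^sup>+ w. G w \<partial>lborel) = (\<integral>\<^sup>+ v. G (a + v) \<partial>lborel)"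
    by (subst lborel_distr_plus[of a, symmetric]) (simp add: nn_integral_distr)
  also have "\<dots> = (\<integral>\<^sup>+ t. indicator {0..1::real} t * (\<integral>\<^sup>+ v. G (a + v) \<partial>lborel) \<partial>lborel)"
    by (subst nn_integral_multc) simp_all
  also have "\<dots> = (\<integral>\<^sup>+ t. \<integral>\<^sup>+ v. indicator {0..1::real} t * G (a + e t * v) \<partial>lborel \<partial>lborel)"
    by (intro nn_integral_cong)
      (simp add: nn_integral_cmult nn_integral_lborel_rotation[of "\<lambda>v. G (a + v)", OF _ norm_e])
  also have "\<dots> = (\<integral>\<^sup>+ v. \<integral>\<^sup>+ t. indicator {0..1::real} t * G (a + e t * v) \<partial>lborel \<partial>lborel)"
    by (rule lborel_pair.Fubini'[symmetric]) measurable
  finally show ?thesis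
    by (simp add: e_def)
qed

context nonneg_mono_convex
begin

lemma le_disc_mean:
  assumes hol: "f holomorphic_on ball a r" and r: "0 < r"
  shows "ennreal (pi * r\<^sup>2 * \<phi> (norm (f a))) \<le>
    (\<integral>\<^sup>+ w. ennreal (indicator (ball a r) w * \<phi> (norm (f w))) \<partial>lborel)"
proof -
  define G where "G w = ennreal (indicator (ball a r) w * \<phi> (norm (f w)))" for w
  define e where "e t = exp (2 * of_real pi * \<i> * of_real t)" for t :: real
  have "(\<lambda>w. indicator (ball a r) w * \<phi> (norm (f w))) \<in> borel_measurable borel"
    by (intro indicator_ball_times_borel continuous_on_norm holomorphic_on_imp_continuous_on[OF hol])
  then have "G \<in> borel_measurable borel"
    unfolding G_def by measurable
  have "ennreal (pi * r\<^sup>2 * \<phi> (norm (f a))) = (\<integral>\<^sup>+ v. ennreal (\<phi> (norm (f a))) * indicator (ball (0::complex) r) v \<partial>lborel)"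
    using r nonneg by (simp add: nn_integral_cmult_indicator emeasure_ball unit_ball_vol_2 ennreal_mult' mult.commute)
  also have "\<dots> \<le> (\<integral>\<^sup>+ v. \<integral>\<^sup>+ t. indicator {0..1} t * G (a + e t * v) \<partial>lborel \<partial>lborel)"
  proof (intro nn_integral_mono)
    fix v :: complex
    show "ennreal (\<phi> (norm (f a))) * indicator (ball 0 r) v \<le> (\<integral>\<^sup>+ t. indicator {0..1} t * G (a + e t * v) \<partial>lborel)"
    proof (cases "v \<in> ball 0 r")
      case True
      then have "ennreal (\<phi> (norm (f a))) \<le>
          (\<integral>\<^sup>+ t. ennreal (\<phi> (norm (f (a + v * e t)))) * indicator {0..1} t \<partial>lborel)"
        unfolding e_def by (intro le_circle_mean[OF hol]) simp
      also have "\<dots> = (\<integral>\<^sup>+ t. indicator {0..1} t * G (a + e t * v) \<partial>lborel)"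
        using True by (intro nn_integral_cong) (auto simp: G_def e_def dist_norm norm_mult norm_exp_eq_Re mult.commute)
      finally show ?thesis
        using True by simp
    qed simp
  qed
  also have "\<dots> = (\<integral>\<^sup>+ w. G w \<partial>lborel)"
    unfolding e_def by (rule nn_integral_lborel_rotation_average[symmetric]) fact
  finally show ?thesis
    by (simp add: G_def)
qed

end

section \<open>Hastings--Luecking sets\<close>

lemma pow2_add_less_unique:
  fixes n n' j j' :: nat
  assumes "2 ^ n + j = 2 ^ n' + j'" "j < 2 ^ n" "j' < 2 ^ n'"
  shows "n = n'"
proof (rule ccontr)
  assume "n \<noteq> n'"
  then consider "n < n'" | "n' < n"
    by linarith
  then show False
  proof cases
    case 1
    then have "(2::nat) ^ (n + 1) \<le> 2 ^ n'"
      by (intro power_increasing) auto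
    then show False
      using assms by simp
  next
    case 2
    then have "(2::nat) ^ (n' + 1) \<le> 2 ^ n"
      by (intro power_increasing) auto
    then show False
      using assms by simp
  qed
qed

lemma dyadic_annulus_unique:
  fixes r :: real
  assumes "1 - 1 / 2 ^ n \<le> r" "r < 1 - 1 / 2 ^ (n + 1)" "1 - 1 / 2 ^ n' \<le> r" "r < 1 - 1 / 2 ^ (n' + 1)"
  shows "n = n'"
proof -
  have False if "m < m'" "1 - 1 / 2 ^ m' \<le> r" "r < 1 - 1 / 2 ^ (m + 1)" for m m' :: nat
  proof -
    have "(2::real) ^ (m + 1) \<le> 2 ^ m'"
      using that by (intro power_increasing) auto
    then have "1 / 2 ^ m' \<le> (1::real) / 2 ^ (m + 1)"
      by (intro divide_left_mono) auto
    then show False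
      using that by linarith
  qed
  then show ?thesis
    using assms by (metis linorder_neqE_nat)
qed

lemma window_index_unique:
  fixes j j' :: nat and m :: int and y y' P :: real
  assumes "2 * real j - 1 \<le> y" "y < 2 * real j + 1" "2 * real j' - 1 \<le> y'" "y' < 2 * real j' + 1"
    and "y' - y = P * m" "2 * real j + 2 \<le> P" "2 * real j' + 2 \<le> P"
  shows "j = j'"
proof -
  have "0 \<le> real j" "0 \<le> real j'"
    by simp_all
  then have "P * m < P * 1" "P * (- 1) < P * m" and P: "0 < P"
    using assms by linarith+
  then have "m = 0"
    by (simp only: mult_less_cancel_left_pos)
  then show ?thesis
    using assms by simp
qed

text \<open>Here y is the argument of z rescaled by 2^n / \<pi>, so that the angular condition reads
  2j - 1 \<le> y < 2j + 1.\<close>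

lemma HL_setE:
  assumes "z \<in> HL_set k"
  obtains n j :: nat and m :: int and y :: real
  where "k = 2 ^ n + j - 1" "j < 2 ^ n" "1 - 1 / 2 ^ n \<le> norm z" "norm z < 1 - 1 / 2 ^ (n + 1)"
    "2 * real j - 1 \<le> y" "y < 2 * real j + 1" "pi * y / 2 ^ n = Arg z + 2 * pi * m"
proof -
  obtain n j and m :: int where nj: "k = 2 ^ n + j - 1" "j \<le> 2 ^ n - 1"
    and r: "1 - 1 / 2 ^ n \<le> norm z" "norm z < 1 - 1 / 2 ^ (n + 1)"
    and \<alpha>: "(2 * real j - 1) * pi / 2 ^ n \<le> Arg z + 2 * pi * m" "Arg z + 2 * pi * m < (2 * real j + 1) * pi / 2 ^ n"
    using assms unfolding HL_set_def by blast
  define y where "y = (Arg z + 2 * pi * m) * 2 ^ n / pi"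
  have "j < 2 ^ n"
    using nj(2) by (metis One_nat_def Suc_pred le_imp_less_Suc pos2 zero_less_power)
  moreover have "2 * real j - 1 \<le> y" "y < 2 * real j + 1" "pi * y / 2 ^ n = Arg z + 2 * pi * m"
    using \<alpha> by (simp_all add: y_def field_simps)
  ultimately show ?thesis
    using that nj(1) r by blast
qed

lemma HL_set_disjoint:
  assumes "z \<in> HL_set k" "z \<in> HL_set k'"
  shows "k = k'"
proof -
  obtain n j and m :: int and y where A: "k = 2 ^ n + j - 1" "j < 2 ^ n" "1 - 1 / 2 ^ n \<le> norm z" "norm z < 1 - 1 / 2 ^ (n + 1)"
    "2 * real j - 1 \<le> y" "y < 2 * real j + 1" "pi * y / 2 ^ n = Arg z + 2 * pi * m"
    using assms(1) by (rule HL_setE)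
  obtain n' j' and m' :: int and y' where B: "k' = 2 ^ n' + j' - 1" "j' < 2 ^ n'" "1 - 1 / 2 ^ n' \<le> norm z" "norm z < 1 - 1 / 2 ^ (n' + 1)"
    "2 * real j' - 1 \<le> y'" "y' < 2 * real j' + 1" "pi * y' / 2 ^ n' = Arg z + 2 * pi * m'"
    using assms(2) by (rule HL_setE)
  have n: "n' = n"
    using dyadic_annulus_unique A(3,4) B(3,4) by blast
  have "pi * y = 2 ^ n * (Arg z + 2 * pi * m)" "pi * y' = 2 ^ n * (Arg z + 2 * pi * m')"
    using A(7) B(7) unfolding n by (simp_all add: field_simps)
  then have "pi * (y' - y) = pi * (2 * 2 ^ n * (m' - m))"
    by (simp add: algebra_simps)
  then have "y' - y = 2 * 2 ^ n * of_int (m' - m)"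
    by simp
  moreover have "real j + 1 \<le> 2 ^ n" "real j' + 1 \<le> 2 ^ n"
    using A(2) B(2) unfolding n by (simp_all add: Suc_le_eq[symmetric] of_nat_le_iff[symmetric, where 'a=real])
  ultimately have "j = j'"
    using window_index_unique[OF A(5,6) B(5,6), where P="2 * 2 ^ n" and m="m' - m"] by simp
  then show ?thesis
    using A(1) B(1) n by simp
qed

lemma norm_cis_diff_le: "norm (cis a - cis b) \<le> \<bar>a - b\<bar>"
proof -
  define x where "x = a - b"
  have "norm (cis a - cis b) = norm (cis x - 1)"
    by (simp add: x_def norm_mult cis_divide[symmetric] norm_divide divide_simps)
  also have "\<dots> = \<bar>2 * sin (x / 2)\<bar>"
  proof -
    have "(norm (cis x - 1))\<^sup>2 = (cos x - 1)\<^sup>2 + (sin x)\<^sup>2"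
      by (simp add: cmod_power2)
    also have "\<dots> = (2 * sin (x / 2))\<^sup>2"
      using sin_cos_squared_add[of x] cos_double_sin[of "x / 2"] by (simp add: power2_eq_square algebra_simps)
    finally show ?thesis
      by (metis abs_norm_cancel power2_abs power2_eq_iff_nonneg abs_ge_zero norm_ge_zero)
  qed
  also have "\<dots> \<le> \<bar>x\<bar>"
    using abs_sin_x_le_abs_x[of "x / 2"] by (simp add: abs_mult)
  finally show ?thesis
    by (simp add: x_def)
qed

lemma norm_rcis_diff_le: "norm (rcis r \<beta> - rcis s \<alpha>) \<le> \<bar>r - s\<bar> + \<bar>s\<bar> * \<bar>\<beta> - \<alpha>\<bar>"
proof -
  have "rcis r \<beta> - rcis s \<alpha> = of_real (r - s) * cis \<beta> + of_real s * (cis \<beta> - cis \<alpha>)"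
    by (simp add: rcis_def algebra_simps)
  then have "norm (rcis r \<beta> - rcis s \<alpha>) \<le> \<bar>r - s\<bar> + \<bar>s\<bar> * norm (cis \<beta> - cis \<alpha>)"
    using norm_triangle_ineq[of "of_real (r - s) * cis \<beta>" "of_real s * (cis \<beta> - cis \<alpha>)"]
    by (simp add: norm_mult del: of_real_diff)
  also have "\<dots> \<le> \<bar>r - s\<bar> + \<bar>s\<bar> * \<bar>\<beta> - \<alpha>\<bar>"
    by (intro add_left_mono mult_left_mono norm_cis_diff_le) simp
  finally show ?thesis .
qed

lemma rcis_norm_Arg_add_2pi: "rcis (norm z) (Arg z + 2 * pi * of_int m) = z"
proof -
  have "cis (Arg z + 2 * pi * of_int m) = cis (Arg z)"
    by (simp add: cis_mult[symmetric])
  then show ?thesis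
    using rcis_cmod_Arg[of z] by (simp add: rcis_def)
qed

lemma norm_rcis_diff_lt_polar_cell:
  assumes "0 < p" "1 - p \<le> norm z" "norm z < 1 - p / 2" "1 - p \<le> norm a" "norm a < 1 - p / 2"
    and "\<bar>\<beta> - \<alpha>\<bar> < 2 * pi * p"
  shows "norm (rcis (norm a) \<beta> - rcis (norm z) \<alpha>) < 14 * (1 - norm z)"
proof -
  have "norm (rcis (norm a) \<beta> - rcis (norm z) \<alpha>) \<le> \<bar>norm a - norm z\<bar> + norm z * \<bar>\<beta> - \<alpha>\<bar>"
    by (metis norm_rcis_diff_le abs_norm_cancel)
  also have "\<dots> \<le> \<bar>norm a - norm z\<bar> + \<bar>\<beta> - \<alpha>\<bar>"
    using assms by (simp add: mult_left_le_one_le)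
  also have "\<dots> < p / 2 + 2 * pi * p"
  proof -
    have "\<bar>norm a - norm z\<bar> < p / 2"
      using assms unfolding abs_less_iff by linarith
    then show ?thesis
      using assms(6) by linarith
  qed
  also have "\<dots> \<le> 7 * p"
  proof -
    have "pi \<le> 13 / 4"
      using pi_approx(2) by simp
    then have "pi * p \<le> 13 / 4 * p"
      using assms(1) by (intro mult_right_mono) auto
    then show ?thesis
      by linarith
  qed
  also have "\<dots> < 14 * (1 - norm z)"
    using assms by simp
  finally show ?thesis .
qed

lemma HL_set_close:
  assumes "z \<in> HL_set k" "a \<in> HL_set k"
  shows "norm z < 1" "norm (a - z) < 14 * (1 - norm z)" "1 - norm z < 2 * (1 - norm a)"
proof -
  obtain n j and m :: int and y where A: "k = 2 ^ n + j - 1" "j < 2 ^ n" "1 - 1 / 2 ^ n \<le> norm z"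
    "norm z < 1 - 1 / 2 ^ (n + 1)" "2 * real j - 1 \<le> y" "y < 2 * real j + 1" "pi * y / 2 ^ n = Arg z + 2 * pi * m"
    using assms(1) by (rule HL_setE)
  obtain n' j' and m' :: int and y' where B: "k = 2 ^ n' + j' - 1" "j' < 2 ^ n'" "1 - 1 / 2 ^ n' \<le> norm a"
    "norm a < 1 - 1 / 2 ^ (n' + 1)" "2 * real j' - 1 \<le> y'" "y' < 2 * real j' + 1" "pi * y' / 2 ^ n' = Arg a + 2 * pi * m'"
    using assms(2) by (rule HL_setE)
  have "(1::nat) \<le> 2 ^ n" "(1::nat) \<le> 2 ^ n'"
    by simp_all
  then have "2 ^ n + j = 2 ^ n' + j'"
    using A(1) B(1) by linarith
  moreover from this have n: "n' = n"
    using pow2_add_less_unique A(2) B(2) by metis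
  ultimately have j: "j' = j"
    by simp
  define p :: real where "p = 1 / 2 ^ n"
  have p: "0 < p" "1 / 2 ^ (n + 1) = p / 2"
    by (simp_all add: p_def)
  have z: "1 - p \<le> norm z" "norm z < 1 - p / 2" and a: "1 - p \<le> norm a" "norm a < 1 - p / 2"
    using A(3,4) B(3,4) p unfolding n p_def by simp_all
  then show "norm z < 1" "1 - norm z < 2 * (1 - norm a)"
    using p by simp_all
  have "\<bar>y' - y\<bar> < 2"
    using A(5,6) B(5,6) unfolding j abs_less_iff by linarith
  moreover have "pi * y' / 2 ^ n - pi * y / 2 ^ n = pi * p * (y' - y)"
    by (simp add: p_def field_simps)
  ultimately have "\<bar>pi * y' / 2 ^ n - pi * y / 2 ^ n\<bar> < 2 * pi * p"
    using p by (simp add: abs_mult)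
  from norm_rcis_diff_lt_polar_cell[OF p(1) z a this]
  show "norm (a - z) < 14 * (1 - norm z)"
    using A(7) B(7) unfolding n by (simp add: rcis_norm_Arg_add_2pi)
qed

lemma HL_set_subset_cball: "HL_set k \<subseteq> cball 0 (1 - 1 / 2 ^ (k + 1))"
proof
  fix z
  assume "z \<in> HL_set k"
  then obtain n j where "k = 2 ^ n + j - 1" "norm z < 1 - 1 / 2 ^ (n + 1)"
    by (rule HL_setE)
  moreover from this have "n \<le> k"
    using less_exp[of n] by linarith
  then have "1 / 2 ^ (k + 1) \<le> (1::real) / 2 ^ (n + 1)"
    by (intro divide_left_mono power_increasing) auto
  ultimately show "z \<in> cball 0 (1 - 1 / 2 ^ (k + 1))"
    by simp
qed

lemma borel_measurable_Arg [measurable]: "Arg \<in> borel_measurable borel"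
proof -
  have Arg_eq: "Arg = (\<lambda>z. if z \<in> \<real>\<^sub>\<le>\<^sub>0 then if Re z < 0 then pi else 0 else indicator (- \<real>\<^sub>\<le>\<^sub>0) z *\<^sub>R Arg z)"
    by (auto simp: fun_eq_iff Arg_real nonpos_Reals_def)
  have "(\<lambda>z. indicator (- \<real>\<^sub>\<le>\<^sub>0) z *\<^sub>R Arg z) \<in> borel_measurable borel"
    by (rule borel_measurable_continuous_on_indicator) (auto intro: continuous_on_Arg)
  moreover have "(\<real>\<^sub>\<le>\<^sub>0 :: complex set) \<in> sets borel"
    by (rule borel_closed) simp
  ultimately have "(\<lambda>z. if z \<in> \<real>\<^sub>\<le>\<^sub>0 then if Re z < 0 then pi else 0 else indicator (- \<real>\<^sub>\<le>\<^sub>0) z *\<^sub>R Arg z)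
      \<in> borel_measurable borel"
    by (intro measurable_If_set) auto
  then show ?thesis
    by (subst Arg_eq)
qed

lemma sets_HL_set [measurable]: "HL_set k \<in> sets borel"
  unfolding HL_set_def by measurable

lemma bdd_above_norm_HL_set:
  assumes "continuous_on (ball 0 1) f"
  shows "bdd_above ((\<lambda>w. norm (f w)) ` HL_set k)"
proof -
  let ?K = "cball (0::complex) (1 - 1 / 2 ^ (k + 1))"
  have "?K \<subseteq> ball 0 1"
  proof
    fix x
    assume "x \<in> ?K"
    then have "norm x \<le> 1 - 1 / 2 ^ (k + 1)"
      by simp
    moreover have "0 < (1::real) / 2 ^ (k + 1)"
      by simp
    ultimately have "norm x < 1"
      by linarith
    then show "x \<in> ball 0 1"
      by simp
  qed
  then have "compact ((\<lambda>w. norm (f w)) ` ?K)"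
    by (intro compact_continuous_image continuous_on_norm continuous_on_subset[OF assms]) auto
  then show ?thesis
    by (rule bdd_above_mono[OF bounded_imp_bdd_above[OF compact_imp_bounded]])
      (use HL_set_subset_cball[of k] in auto)
qed

lemma Lambda_sums: "(\<lambda>k. (SUP w\<in>HL_set k. norm (f w)) * indicator (HL_set k) z) sums Lambda f z"
proof -
  have "finite {k. z \<in> HL_set k}"
  proof (cases "\<exists>k. z \<in> HL_set k")
    case True
    then obtain k where "z \<in> HL_set k"
      by blast
    then have "{k. z \<in> HL_set k} = {k}"
      using HL_set_disjoint by blast
    then show ?thesis
      by simp
  qed simp
  then have "summable (\<lambda>k. (SUP w\<in>HL_set k. norm (f w)) * indicator (HL_set k) z)"
    by (rule summable_finite) simp
  then show ?thesis
    unfolding Lambda_def by (rule summable_sums)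
qed

lemma Lambda_eq_SUP:
  assumes "z \<in> HL_set k"
  shows "Lambda f z = (SUP w\<in>HL_set k. norm (f w))"
proof -
  have "(\<lambda>i. (SUP w\<in>HL_set i. norm (f w)) * indicator (HL_set i) z) =
      (\<lambda>i. if i = k then SUP w\<in>HL_set i. norm (f w) else 0)"
  proof
    fix i
    show "(SUP w\<in>HL_set i. norm (f w)) * indicator (HL_set i) z = (if i = k then SUP w\<in>HL_set i. norm (f w) else 0)"
      using assms HL_set_disjoint[OF assms, of i] by (cases "i = k") (auto simp: indicator_def)
  qed
  then have "(\<lambda>i. (SUP w\<in>HL_set i. norm (f w)) * indicator (HL_set i) z) sums (SUP w\<in>HL_set k. norm (f w))"
    using sums_single[of k "\<lambda>i. SUP w\<in>HL_set i. norm (f w)"] by simp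
  then show ?thesis
    by (rule sums_unique2[OF Lambda_sums])
qed

lemma Lambda_eq_0: "(\<And>k. z \<notin> HL_set k) \<Longrightarrow> Lambda f z = 0"
  by (simp add: Lambda_def)

lemma borel_measurable_Lambda [measurable]: "Lambda f \<in> borel_measurable borel"
proof (rule borel_measurable_LIMSEQ_metric)
  fix z
  show "(\<lambda>i. \<Sum>k<i. (SUP w\<in>HL_set k. norm (f w)) * indicator (HL_set k) z) \<longlonglongrightarrow> Lambda f z"
    using Lambda_sums[of f z] by (simp add: sums_def)
qed measurable

lemma Lambda_nonneg:
  assumes "continuous_on (ball 0 1) f"
  shows "0 \<le> Lambda f z"
proof (cases "\<exists>k. z \<in> HL_set k")
  case True
  then obtain k where k: "z \<in> HL_set k"
    by blast
  have "norm (f z) \<le> (SUP w\<in>HL_set k. norm (f w))"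
    by (rule cSUP_upper[OF k bdd_above_norm_HL_set[OF assms]])
  then show ?thesis
    using Lambda_eq_SUP[OF k] by (metis norm_ge_zero order_trans)
qed (simp add: Lambda_eq_0)

section \<open>The averaging estimate\<close>

text \<open>For z, a in one Hastings--Luecking set, the disc about a of radius d(a)/4 consists of points w
  with (z, w) \<in> near_pairs and has area at least \<pi> d(z)^2 / 64; this is the normalisation in
  near_average.\<close>

definition near_pairs :: "(complex \<times> complex) set" where
  "near_pairs = {(z, w). norm z < 1 \<and> norm w < 1 \<and> norm (w - z) < 16 * (1 - norm z) \<and> 1 - norm z \<le> 4 * (1 - norm w)}"

definition near_average :: "(complex \<Rightarrow> real) \<Rightarrow> complex \<Rightarrow> ennreal" where
  "near_average u z =
    ennreal (64 / (pi * (1 - norm z)\<^sup>2)) * (\<integral>\<^sup>+ w. indicator near_pairs (z, w) * ennreal (u w) \<partial>lborel)"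

lemma sets_near_pairs [measurable]: "near_pairs \<in> sets borel"
proof -
  have "near_pairs = {p. norm (fst p) < (1::real)} \<inter> {p. norm (snd p) < (1::real)} \<inter>
      {p. norm (snd p - fst p) < 16 * (1 - norm (fst p))} \<inter> {p. 1 - norm (fst p) \<le> 4 * (1 - norm (snd p))}"
    by (auto simp: near_pairs_def)
  also have "\<dots> \<in> sets borel"
    by (intro sets.Int borel_open borel_closed open_Collect_less closed_Collect_le continuous_intros)
  finally show ?thesis .
qed

lemma borel_measurable_near_average [measurable]:
  assumes [measurable]: "u \<in> borel_measurable borel"
  shows "near_average u \<in> borel_measurable borel"
proof -
  have [measurable]: "near_pairs \<in> sets (lborel \<Otimes>\<^sub>M lborel)"
    unfolding lborel_prod by simp
  have "near_average u \<in> borel_measurable lborel"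
    unfolding near_average_def by measurable
  then show ?thesis
    by simp
qed

lemma near_pairs_weight_le:
  assumes "(z, w) \<in> near_pairs"
  shows "64 / (pi * (1 - norm z)\<^sup>2) \<le> 64 * 289 / (pi * (1 - norm w)\<^sup>2)"
    and "z \<in> ball w (64 * (1 - norm w))"
proof -
  have z: "norm z < 1" "norm w < 1" "norm (w - z) < 16 * (1 - norm z)" "1 - norm z \<le> 4 * (1 - norm w)"
    using assms by (auto simp: near_pairs_def)
  have "norm z \<le> norm w + norm (w - z)"
    by (metis norm_minus_commute norm_triangle_sub)
  then have "1 - norm w < 17 * (1 - norm z)"
    using z by argo
  then have "(1 - norm w)\<^sup>2 \<le> (17 * (1 - norm z))\<^sup>2"
    using z by (intro power_mono) auto
  then have "pi * (1 - norm w)\<^sup>2 \<le> pi * (289 * (1 - norm z)\<^sup>2)"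
    unfolding power_mult_distrib by simp
  then have "64 * 289 / (pi * (289 * (1 - norm z)\<^sup>2)) \<le> 64 * 289 / (pi * (1 - norm w)\<^sup>2)"
    using z(1,2) by (intro divide_left_mono mult_pos_pos) simp_all
  then show "64 / (pi * (1 - norm z)\<^sup>2) \<le> 64 * 289 / (pi * (1 - norm w)\<^sup>2)"
    by simp
  show "z \<in> ball w (64 * (1 - norm w))"
    using z by (simp add: dist_norm)
qed

lemma near_weight_integral_le:
  "(\<integral>\<^sup>+ z. ennreal (64 / (pi * (1 - norm z)\<^sup>2)) * indicator near_pairs (z, w) \<partial>lborel) \<le> ennreal (64 * 289 * 4096)"
proof (cases "norm w < 1")
  case False
  then show ?thesis
    by (simp add: near_pairs_def)
next
  case True
  define d where "d = 1 - norm w"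
  define c where "c = 64 * 289 / (pi * d\<^sup>2)"
  have d: "0 < d"
    using True by (simp add: d_def)
  have "ennreal (64 / (pi * (1 - norm z)\<^sup>2)) * indicator near_pairs (z, w) \<le> ennreal c * indicator (ball w (64 * d)) z" for z
    using near_pairs_weight_le[of z w] by (cases "(z, w) \<in> near_pairs") (simp_all add: c_def d_def ennreal_leI)
  then have "(\<integral>\<^sup>+ z. ennreal (64 / (pi * (1 - norm z)\<^sup>2)) * indicator near_pairs (z, w) \<partial>lborel)
      \<le> ennreal c * emeasure lborel (ball w (64 * d))"
    by (subst nn_integral_cmult_indicator[symmetric]) (auto intro: nn_integral_mono)
  also have "\<dots> = ennreal (c * (pi * (64 * d)\<^sup>2))"
  proof -
    have "emeasure lborel (ball w (64 * d)) = ennreal (pi * (64 * d)\<^sup>2)"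
      using d by (simp add: emeasure_ball unit_ball_vol_2)
    moreover have "0 \<le> c"
      by (simp add: c_def)
    ultimately show ?thesis
      by (simp add: ennreal_mult'')
  qed
  also have "c * (pi * (64 * d)\<^sup>2) = 64 * 289 * 4096"
    unfolding c_def using d by (simp add: field_simps power2_eq_square)
  finally show ?thesis .
qed

lemma nn_integral_near_average_le:
  assumes [measurable]: "u \<in> borel_measurable borel" and u: "\<And>w. 0 \<le> u w"
  shows "(\<integral>\<^sup>+ z. near_average u z \<partial>lborel) \<le> ennreal (64 * 289 * 4096) * (\<integral>\<^sup>+ w. u w \<partial>lborel)"
proof -
  define W where "W z = ennreal (64 / (pi * (1 - norm z)\<^sup>2))" for z :: complex
  have [measurable]: "W \<in> borel_measurable borel"
    unfolding W_def by measurable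
  have [measurable]: "near_pairs \<in> sets (lborel \<Otimes>\<^sub>M lborel)"
    unfolding lborel_prod by simp
  have "(\<integral>\<^sup>+ z. near_average u z \<partial>lborel) = (\<integral>\<^sup>+ z. \<integral>\<^sup>+ w. W z * indicator near_pairs (z, w) * u w \<partial>lborel \<partial>lborel)"
    unfolding near_average_def W_def by (subst nn_integral_cmult[symmetric]) (auto simp: mult.assoc)
  also have "\<dots> = (\<integral>\<^sup>+ w. \<integral>\<^sup>+ z. W z * indicator near_pairs (z, w) * u w \<partial>lborel \<partial>lborel)"
    by (rule lborel_pair.Fubini'[symmetric]) measurable
  also have "\<dots> = (\<integral>\<^sup>+ w. (\<integral>\<^sup>+ z. W z * indicator near_pairs (z, w) \<partial>lborel) * u w \<partial>lborel)"
    by (subst nn_integral_multc) auto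
  also have "\<dots> \<le> (\<integral>\<^sup>+ w. ennreal (64 * 289 * 4096) * u w \<partial>lborel)"
    unfolding W_def by (intro nn_integral_mono mult_right_mono near_weight_integral_le) simp
  also have "\<dots> = ennreal (64 * 289 * 4096) * (\<integral>\<^sup>+ w. u w \<partial>lborel)"
    by (rule nn_integral_cmult) simp
  finally show ?thesis .
qed

lemma HL_set_ball_subset_near_pairs:
  assumes "z \<in> HL_set k" "a \<in> HL_set k" "w \<in> ball a ((1 - norm a) / 4)"
  shows "(z, w) \<in> near_pairs"
proof -
  have z: "norm z < 1" "norm (a - z) < 14 * (1 - norm z)" "1 - norm z < 2 * (1 - norm a)"
    and a: "norm a < 1" "1 - norm a < 2 * (1 - norm z)"
    using HL_set_close[OF assms(1,2)] HL_set_close[OF assms(2,1)] by auto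
  have wa: "4 * norm (w - a) < 1 - norm a"
    using assms(3) by (simp add: dist_norm norm_minus_commute)
  have "norm w \<le> norm a + norm (w - a)" "norm (w - z) \<le> norm (w - a) + norm (a - z)"
    using norm_triangle_sub[of w a] norm_triangle_ineq[of "w - a" "a - z"] by simp_all
  then show ?thesis
    unfolding near_pairs_def using z a wa norm_ge_zero[of "w - a"] by simp
qed

context nonneg_mono_convex
begin

lemma le_near_average:
  assumes hol: "f holomorphic_on ball 0 1" and za: "z \<in> HL_set k" "a \<in> HL_set k"
  shows "ennreal (\<phi> (norm (f a))) \<le> near_average (\<lambda>w. indicator (ball 0 1) w * \<phi> (norm (f w))) z"
proof -
  define r where "r = (1 - norm a) / 4"
  define I where "I = (\<integral>\<^sup>+ w. indicator near_pairs (z, w) * ennreal (indicator (ball 0 1) w * \<phi> (norm (f w))) \<partial>lborel)"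
  have z: "norm z < 1" "1 - norm z < 2 * (1 - norm a)" and a: "norm a < 1"
    using HL_set_close[OF za] HL_set_close[OF za(2,1)] by auto
  then have r: "0 < r"
    by (simp add: r_def)
  have near: "(z, w) \<in> near_pairs" if "w \<in> ball a r" for w
    using HL_set_ball_subset_near_pairs[OF za] that by (simp add: r_def)
  then have sub: "ball a r \<subseteq> ball 0 1"
    by (auto simp: near_pairs_def)
  have "ennreal (pi * r\<^sup>2 * \<phi> (norm (f a))) \<le> (\<integral>\<^sup>+ w. ennreal (indicator (ball a r) w * \<phi> (norm (f w))) \<partial>lborel)"
    by (rule le_disc_mean[OF holomorphic_on_subset[OF hol sub] r])
  also have "\<dots> \<le> I"
    unfolding I_def using near sub by (intro nn_integral_mono) (auto simp: indicator_def subset_eq)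
  finally have le: "ennreal (pi * r\<^sup>2 * \<phi> (norm (f a))) \<le> I" .
  have "ennreal (\<phi> (norm (f a))) = ennreal (1 / (pi * r\<^sup>2)) * ennreal (pi * r\<^sup>2 * \<phi> (norm (f a)))"
    using r nonneg by (simp add: ennreal_mult''[symmetric])
  also have "\<dots> \<le> ennreal (1 / (pi * r\<^sup>2)) * I"
    by (rule mult_left_mono[OF le]) simp
  also have "\<dots> \<le> ennreal (64 / (pi * (1 - norm z)\<^sup>2)) * I"
  proof (intro mult_right_mono ennreal_leI)
    define da dz where "da = 1 - norm a" and "dz = 1 - norm z"
    have "0 < dz" "0 < da" "dz\<^sup>2 \<le> (2 * da)\<^sup>2"
      using z a by (auto simp: da_def dz_def intro!: power_mono)
    then have "64 / (pi * (4 * da\<^sup>2)) \<le> 64 / (pi * dz\<^sup>2)"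
      by (intro divide_left_mono mult_pos_pos) (simp_all add: power_mult_distrib)
    then show "1 / (pi * r\<^sup>2) \<le> 64 / (pi * (1 - norm z)\<^sup>2)"
      by (simp add: r_def da_def dz_def power_divide)
  qed simp
  finally show ?thesis
    by (simp add: near_average_def I_def)
qed

lemma Lambda_le_near_average:
  assumes hol: "f holomorphic_on ball 0 1" and "\<phi> 0 = 0"
  shows "ennreal (\<phi> (Lambda f z)) \<le> near_average (\<lambda>w. indicator (ball 0 1) w * \<phi> (norm (f w))) z"
proof (cases "\<exists>k. z \<in> HL_set k")
  case True
  then obtain k where k: "z \<in> HL_set k"
    by blast
  show ?thesis
  proof (cases "near_average (\<lambda>w. indicator (ball 0 1) w * \<phi> (norm (f w))) z" rule: ennreal_cases)
    case (real b)
    have "\<phi> (SUP w\<in>HL_set k. norm (f w)) \<le> b"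
    proof (rule SUP_le)
      show "bdd_above ((\<lambda>w. norm (f w)) ` HL_set k)"
        by (rule bdd_above_norm_HL_set[OF holomorphic_on_imp_continuous_on[OF hol]])
      show "\<phi> (norm (f a)) \<le> b" if "a \<in> HL_set k" for a
        using le_near_average[OF hol k that] real nonneg by simp
    qed (use k in auto)
    then show ?thesis
      using real Lambda_eq_SUP[OF k] by (simp add: ennreal_leI)
  qed simp
qed (simp add: Lambda_eq_0 assms(2))

end

section \<open>Orlicz modular and Luxemburg norm\<close>

lemma measurable_areaD: "h \<in> borel_measurable borel \<Longrightarrow> h \<in> borel_measurable areaD"
  unfolding areaD_def by (simp add: measurable_restrict_space1 measurable_cong_sets[OF sets_density refl])

lemma nn_integral_areaD:
  assumes "h \<in> borel_measurable areaD"
  shows "(\<integral>\<^sup>+ z. h z \<partial>areaD) = ennreal (1 / pi) * (\<integral>\<^sup>+ z. h z * indicator (ball 0 1) z \<partial>lborel)"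
proof -
  have "h \<in> borel_measurable (restrict_space lborel (ball 0 1))"
    using assms unfolding areaD_def by (simp add: measurable_cong_sets[OF sets_density refl])
  then have "(\<integral>\<^sup>+ z. h z \<partial>areaD) = (\<integral>\<^sup>+ z. ennreal (1 / pi) * h z \<partial>restrict_space lborel (ball 0 1))"
    unfolding areaD_def by (intro nn_integral_density) simp_all
  also have "\<dots> = ennreal (1 / pi) * (\<integral>\<^sup>+ z. h z \<partial>restrict_space lborel (ball 0 1))"
    using \<open>h \<in> borel_measurable (restrict_space lborel (ball 0 1))\<close> by (rule nn_integral_cmult)
  finally show ?thesis
    by (simp add: nn_integral_restrict_space)
qed

lemma orlicz_modular_eq_lborel:
  fixes g :: "complex \<Rightarrow> 'a::real_normed_vector"
  assumes \<Psi>: "orlicz_function \<Psi>" and [measurable]: "g \<in> borel_measurable areaD" and "0 < C"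
  shows "orlicz_modular \<Psi> g C =
    ennreal (1 / pi) * (\<integral>\<^sup>+ z. ennreal (indicator (ball 0 1) z * orlicz_ext \<Psi> (norm (g z) / C)) \<partial>lborel)"
proof -
  have [measurable]: "orlicz_ext \<Psi> \<in> borel_measurable borel"
    by (rule borel_measurable_mono[OF orlicz_ext_mono[OF \<Psi>]])
  have "orlicz_modular \<Psi> g C = (\<integral>\<^sup>+ z. ennreal (orlicz_ext \<Psi> (norm (g z) / C)) \<partial>areaD)"
    unfolding orlicz_modular_def orlicz_ext_def using \<open>0 < C\<close> by simp
  also have "\<dots> = ennreal (1 / pi) * (\<integral>\<^sup>+ z. ennreal (orlicz_ext \<Psi> (norm (g z) / C)) * indicator (ball 0 1) z \<partial>lborel)"
    by (intro nn_integral_areaD) measurable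
  also have "\<dots> = ennreal (1 / pi) * (\<integral>\<^sup>+ z. ennreal (indicator (ball 0 1) z * orlicz_ext \<Psi> (norm (g z) / C)) \<partial>lborel)"
    by (intro arg_cong2[where f=times] nn_integral_cong refl) (simp add: indicator_def)
  finally show ?thesis .
qed

lemma nonneg_mono_convex_orlicz_ext_scaled:
  assumes \<Psi>: "orlicz_function \<Psi>" and "0 < C"
  shows "nonneg_mono_convex (\<lambda>x. orlicz_ext \<Psi> (x / C))"
proof
  show "convex_on UNIV (\<lambda>x. orlicz_ext \<Psi> (x / C))"
    using convex_on_scaled_arg[OF orlicz_ext_convex[OF \<Psi>], of "1 / C"] by simp
  show "mono (\<lambda>x. orlicz_ext \<Psi> (x / C))"
    using \<open>0 < C\<close> orlicz_ext_mono[OF \<Psi>] by (auto simp: mono_def divide_right_mono)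
qed (rule orlicz_ext_nonneg[OF \<Psi>])

lemma orlicz_modular_Lambda_le:
  assumes \<Psi>: "orlicz_function \<Psi>" and hol: "f holomorphic_on ball 0 1" and f: "f \<in> borel_measurable areaD"
    and C: "0 < C"
  shows "orlicz_modular \<Psi> (Lambda f) (64 * 289 * 4096 * C) \<le> orlicz_modular \<Psi> f C"
proof -
  define M :: real where "M = 64 * 289 * 4096"
  define \<phi> where "\<phi> = (\<lambda>x. orlicz_ext \<Psi> (x / C))"
  interpret nonneg_mono_convex \<phi>
    unfolding \<phi>_def using \<Psi> C by (rule nonneg_mono_convex_orlicz_ext_scaled)
  have \<phi>0: "\<phi> 0 = 0"
    by (simp add: \<phi>_def orlicz_ext_0[OF \<Psi>])
  define u where "u w = indicator (ball 0 1) w * \<phi> (norm (f w))" for w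
  have [measurable]: "u \<in> borel_measurable borel"
    unfolding u_def by (intro indicator_ball_times_borel continuous_on_norm holomorphic_on_imp_continuous_on[OF hol])
  have "orlicz_modular \<Psi> (Lambda f) (M * C) = ennreal (1 / pi) * (\<integral>\<^sup>+ z. ennreal (indicator (ball 0 1) z * \<phi> (Lambda f z / M)) \<partial>lborel)"
    using Lambda_nonneg[OF holomorphic_on_imp_continuous_on[OF hol]] C
    by (subst orlicz_modular_eq_lborel[OF \<Psi> measurable_areaD]) (simp_all add: M_def \<phi>_def mult.commute)
  also have "\<dots> \<le> ennreal (1 / pi) * (\<integral>\<^sup>+ z. ennreal (1 / M) * near_average u z \<partial>lborel)"
  proof (intro mult_left_mono nn_integral_mono)
    fix z
    have "indicator (ball 0 1) z * \<phi> (Lambda f z / M) \<le> 1 / M * \<phi> (Lambda f z)"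
      using convex_on_divide_le[OF convex \<phi>0, of M] nonneg by (simp add: M_def indicator_def)
    then have "ennreal (indicator (ball 0 1) z * \<phi> (Lambda f z / M)) \<le> ennreal (1 / M) * ennreal (\<phi> (Lambda f z))"
      by (simp add: ennreal_mult'[symmetric] M_def ennreal_leI)
    also have "\<dots> \<le> ennreal (1 / M) * near_average u z"
      unfolding u_def by (intro mult_left_mono Lambda_le_near_average[OF hol \<phi>0]) simp
    finally show "ennreal (indicator (ball 0 1) z * \<phi> (Lambda f z / M)) \<le> ennreal (1 / M) * near_average u z" .
  qed simp
  also have "\<dots> \<le> ennreal (1 / pi) * (ennreal (1 / M) * (ennreal M * (\<integral>\<^sup>+ w. u w \<partial>lborel)))"
    using nn_integral_near_average_le[of u] nonneg
    by (subst nn_integral_cmult) (auto simp: M_def u_def intro!: mult_left_mono)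
  also have "\<dots> = ennreal (1 / pi) * (\<integral>\<^sup>+ w. u w \<partial>lborel)"
  proof -
    have "0 < M"
      by (simp add: M_def)
    then have "ennreal (1 / M) * (ennreal M * X) = X" for X
      by (simp add: mult.assoc[symmetric] ennreal_mult''[symmetric])
    then show ?thesis
      by (simp only:)
  qed
  also have "\<dots> = orlicz_modular \<Psi> f C"
    by (simp add: orlicz_modular_eq_lborel[OF \<Psi> f C] u_def \<phi>_def)
  finally show ?thesis
    by (simp add: M_def)
qed

lemma lux_norm_le_if_modular_le:
  fixes g :: "complex \<Rightarrow> 'a::real_normed_vector" and f :: "complex \<Rightarrow> 'b::real_normed_vector"
  assumes M: "0 < M" and le: "\<And>C. 0 < C \<Longrightarrow> orlicz_modular \<Psi> g (M * C) \<le> orlicz_modular \<Psi> f C"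
    and "0 < C\<^sub>0" "orlicz_modular \<Psi> f C\<^sub>0 \<le> 1"
  shows "lux_norm \<Psi> g \<le> M * lux_norm \<Psi> f"
proof -
  have "Inf {C. 0 < C \<and> orlicz_modular \<Psi> g C \<le> 1} / M \<le> Inf {C. 0 < C \<and> orlicz_modular \<Psi> f C \<le> 1}"
  proof (rule cInf_greatest)
    show "{C. 0 < C \<and> orlicz_modular \<Psi> f C \<le> 1} \<noteq> {}"
      using assms(3,4) by auto
    fix C
    assume "C \<in> {C. 0 < C \<and> orlicz_modular \<Psi> f C \<le> 1}"
    then have "M * C \<in> {C. 0 < C \<and> orlicz_modular \<Psi> g C \<le> 1}"
      using M le[of C] by auto
    then have "Inf {C. 0 < C \<and> orlicz_modular \<Psi> g C \<le> 1} \<le> M * C"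
      by (rule cInf_lower) (auto intro: bdd_belowI[of _ 0])
    then show "Inf {C. 0 < C \<and> orlicz_modular \<Psi> g C \<le> 1} / M \<le> C"
      using M by (simp add: field_simps)
  qed
  then show ?thesis
    using M unfolding lux_norm_def by (simp add: field_simps)
qed

theorem lemma2p2:
  fixes \<Psi> :: "real \<Rightarrow> real"
  assumes "orlicz_function \<Psi>"
  shows "\<exists>C>0. \<forall>f. in_Bergman_Orlicz \<Psi> f \<longrightarrow>
           in_Orlicz \<Psi> (Lambda f) \<and> lux_norm \<Psi> (Lambda f) \<le> C * lux_norm \<Psi> f"
proof (intro exI[of _ "64 * 289 * 4096"] conjI allI impI)
  fix f
  assume "in_Bergman_Orlicz \<Psi> f"
  then obtain C\<^sub>0 where hol: "f holomorphic_on ball 0 1" and f: "f \<in> borel_measurable areaD"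
    and C\<^sub>0: "0 < C\<^sub>0" "orlicz_modular \<Psi> f C\<^sub>0 \<le> 1"
    unfolding in_Bergman_Orlicz_def in_Orlicz_def by blast
  have le: "orlicz_modular \<Psi> (Lambda f) (64 * 289 * 4096 * C) \<le> orlicz_modular \<Psi> f C" if "0 < C" for C
    by (rule orlicz_modular_Lambda_le[OF assms hol f that])
  show "in_Orlicz \<Psi> (Lambda f)"
    unfolding in_Orlicz_def using measurable_areaD[OF borel_measurable_Lambda] le[OF C\<^sub>0(1)] C\<^sub>0
    by (intro conjI exI[of _ "64 * 289 * 4096 * C\<^sub>0"]) auto
  show "lux_norm \<Psi> (Lambda f) \<le> 64 * 289 * 4096 * lux_norm \<Psi> f"
    by (rule lux_norm_le_if_modular_le[OF _ le C\<^sub>0]) simp_all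
qed simp

end
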